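(* Let $\Lambda\in\mathcal H_I$ and let $W$ be a nonempty class of capacities on $(\Omega,\mathcal F)$. Define $\overline w(A)=\sup_{w\in W}w(A)$ and $\underline w(A)=\inf_{w\in W}w(A)$ for $A\in\mathcal F$ (these are capacities). Then for all $X\in\mathcal X$, $$\sup_{w\in W}\Lambda\mathrm{VaR}^{w}(X)=\Lambda\mathrm{VaR}^{\overline w}(X)\quad\text{and}\quad \inf_{w\in W}\Lambda\mathrm{VaR}^{+,w}(X)=\Lambda\mathrm{VaR}^{+,\underline w}(X).$$ In particular, for a nonempty class $\mathcal P$ of probability measures on $(\Omega,\mathcal F)$, $\sup_{\mathbb Q\in\mathcal P}\Lambda\mathrm{VaR}^{\mathbb Q}=\Lambda\mathrm{VaR}^{\overline{\mathbb Q}}$ and $\inf_{\mathbb Q\in\mathcal P}\Lambda\mathrm{VaR}^{+,\mathbb Q}=\Lambda\mathrm{VaR}^{+,\underline{\mathbb Q}}$ with $\overline{\mathbb Q}=\sup_{\mathbb Q\in\mathcal P}\mathbb Q$, $\underline{\mathbb Q}=\inf_{\mathbb Q\in\mathcal P}\mathbb Q$.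
   Context: Let $(\Omega,\mathcal F)$ be a measurable space and $\mathcal X$ a set of real-valued random variables on it containing all bounded ones. A map $w:\mathcal F\to[0,1]$ is a capacity if $w(\emptyset)=0$, $w(\Omega)=1$ and $A\subseteq B$ implies $w(A)\le w(B)$. For $\Lambda:\mathbb R\to[0,1]$ and a capacity $w$: $\Lambda\mathrm{VaR}^w(X)=\inf\{x\in\mathbb R: w(X>x)\le\Lambda(x)\}$, $\Lambda\mathrm{VaR}^{+,w}(X)=\sup\{x\in\mathbb R: w(X>x)\ge\Lambda(x)\}$, with $\inf\emptyset=\infty$, $\sup\emptyset=-\infty$. $\mathcal H_I$ is the set of all (non-strictly) increasing functions $\Lambda:\mathbb R\to(0,1)$. *)

theory Defs
  imports "HOL-Probability.Probability"
begin

text \<open>A capacity on the measurable space underlying M (only its values on sets M matter).\<close>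
definition capacity :: "'a measure \<Rightarrow> ('a set \<Rightarrow> real) \<Rightarrow> bool" where
  "capacity M w \<longleftrightarrow>
     w {} = 0 \<and> w (space M) = 1 \<and>
     (\<forall>A\<in>sets M. 0 \<le> w A \<and> w A \<le> 1) \<and>
     (\<forall>A\<in>sets M. \<forall>B\<in>sets M. A \<subseteq> B \<longrightarrow> w A \<le> w B)"

definition H_I :: "(real \<Rightarrow> real) set" where
  "H_I = {\<Lambda>. mono \<Lambda> \<and> (\<forall>x. 0 < \<Lambda> x \<and> \<Lambda> x < 1)}"

text \<open>Lambda-VaR with respect to a capacity w; values in extended reals
  (Inf of the empty set is +infinity).\<close>
definition LVaR :: "'a measure \<Rightarrow> (real \<Rightarrow> real) \<Rightarrow> ('a set \<Rightarrow> real) \<Rightarrow> ('a \<Rightarrow> real) \<Rightarrow> ereal" where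
  "LVaR M \<Lambda> w X = Inf (ereal ` {x. w {\<omega>\<in>space M. X \<omega> > x} \<le> \<Lambda> x})"

text \<open>Lambda-VaR-plus (Sup of the empty set is -infinity).\<close>
definition LVaR_plus :: "'a measure \<Rightarrow> (real \<Rightarrow> real) \<Rightarrow> ('a set \<Rightarrow> real) \<Rightarrow> ('a \<Rightarrow> real) \<Rightarrow> ereal" where
  "LVaR_plus M \<Lambda> w X = Sup (ereal ` {x. w {\<omega>\<in>space M. X \<omega> > x} \<ge> \<Lambda> x})"

end

(*
  For every capacity w the set {x. w {X > x} \<le> \<Lambda> x} is an up-set of reals, since w is
  monotone and \<Lambda> is increasing.  The corresponding set for the upper capacity sup_w w is the
  intersection of these up-sets, and the infimum of an intersection of up-sets is the supremum
  of their infima.  Dually, the sets {x. \<Lambda> x \<le> w {X > x}} are down-sets, and the lower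
  capacity inf_w w turns the supremum of their intersection into the infimum of their suprema.
  Probability measures are capacities, so the second pair of identities is a special case.
*)

theory Submission
  imports Defs
begin

lemma capacityD:
  assumes "capacity M w"
  shows capacity_empty: "w {} = 0"
    and capacity_space: "w (space M) = 1"
    and capacity_nonneg: "A \<in> sets M \<Longrightarrow> 0 \<le> w A"
    and capacity_le_1: "A \<in> sets M \<Longrightarrow> w A \<le> 1"
    and capacity_mono: "A \<in> sets M \<Longrightarrow> B \<in> sets M \<Longrightarrow> A \<subseteq> B \<Longrightarrow> w A \<le> w B"
  using assms unfolding capacity_def by auto

lemma capacity_measure:
  assumes "prob_space Q" and "sets Q = sets M"
  shows "capacity M (measure Q)"
proof -
  interpret prob_space Q by fact
  have "space Q = space M" using assms(2) by (rule sets_eq_imp_space_eq)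
  then show ?thesis
    unfolding capacity_def using assms(2) prob_space finite_measure_mono by auto
qed

lemma bdd_above_capacities:
  assumes "\<forall>w\<in>W. capacity M w" and "A \<in> sets M"
  shows "bdd_above ((\<lambda>w. w A) ` W)"
  using assms capacity_le_1 by (intro bdd_aboveI2[where M=1]) blast

lemma bdd_below_capacities:
  assumes "\<forall>w\<in>W. capacity M w" and "A \<in> sets M"
  shows "bdd_below ((\<lambda>w. w A) ` W)"
  using assms capacity_nonneg by (intro bdd_belowI2[where m=0]) blast

lemma capacity_SUP:
  assumes W: "W \<noteq> {}" and cap: "\<forall>w\<in>W. capacity M w"
  shows "capacity M (\<lambda>A. SUP w\<in>W. w A)"
proof -
  obtain w0 where w0: "w0 \<in> W" using W by blast
  have "(SUP w\<in>W. w A) = c" if "\<And>w. w \<in> W \<Longrightarrow> w A = c" for A c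
  proof -
    have "(SUP w\<in>W. w A) = (SUP w\<in>W. c)" by (rule SUP_cong) (simp_all add: that)
    then show ?thesis using W by simp
  qed
  then have "(SUP w\<in>W. w {}) = 0" "(SUP w\<in>W. w (space M)) = 1"
    using cap capacity_empty capacity_space by blast+
  moreover have "0 \<le> (SUP w\<in>W. w A)" "(SUP w\<in>W. w A) \<le> 1" if A: "A \<in> sets M" for A
    using cap A w0
    by (auto intro!: cSUP_upper2[OF bdd_above_capacities[OF cap A] w0] cSUP_least[OF W]
        capacity_nonneg capacity_le_1)
  moreover have "(SUP w\<in>W. w A) \<le> (SUP w\<in>W. w B)"
    if "A \<in> sets M" "B \<in> sets M" "A \<subseteq> B" for A B
    using cap that by (intro cSUP_mono[OF W bdd_above_capacities[OF cap that(2)]])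
      (blast intro: capacity_mono)
  ultimately show ?thesis unfolding capacity_def by blast
qed

lemma capacity_INF:
  assumes W: "W \<noteq> {}" and cap: "\<forall>w\<in>W. capacity M w"
  shows "capacity M (\<lambda>A. INF w\<in>W. w A)"
proof -
  obtain w0 where w0: "w0 \<in> W" using W by blast
  have "(INF w\<in>W. w A) = c" if "\<And>w. w \<in> W \<Longrightarrow> w A = c" for A c
  proof -
    have "(INF w\<in>W. w A) = (INF w\<in>W. c)" by (rule INF_cong) (simp_all add: that)
    then show ?thesis using W by simp
  qed
  then have "(INF w\<in>W. w {}) = 0" "(INF w\<in>W. w (space M)) = 1"
    using cap capacity_empty capacity_space by blast+
  moreover have "0 \<le> (INF w\<in>W. w A)" "(INF w\<in>W. w A) \<le> 1" if A: "A \<in> sets M" for A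
    using cap A w0
    by (auto intro!: cINF_lower2[OF bdd_below_capacities[OF cap A] w0] cINF_greatest[OF W]
        capacity_nonneg capacity_le_1)
  moreover have "(INF w\<in>W. w A) \<le> (INF w\<in>W. w B)"
    if "A \<in> sets M" "B \<in> sets M" "A \<subseteq> B" for A B
    using cap that by (intro cINF_mono[OF W bdd_below_capacities[OF cap that(1)]])
      (blast intro: capacity_mono)
  ultimately show ?thesis unfolding capacity_def by blast
qed

lemma Inf_ereal_INTER_upclosed:
  fixes S :: "'i \<Rightarrow> real set"
  assumes up: "\<And>i x y. i \<in> I \<Longrightarrow> x \<in> S i \<Longrightarrow> x \<le> y \<Longrightarrow> y \<in> S i"
  shows "Inf (ereal ` (\<Inter>i\<in>I. S i)) = (SUP i\<in>I. Inf (ereal ` S i))"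
proof (rule antisym)
  show "(SUP i\<in>I. Inf (ereal ` S i)) \<le> Inf (ereal ` (\<Inter>i\<in>I. S i))"
    by (intro SUP_least Inf_superset_mono image_mono) auto
  show "Inf (ereal ` (\<Inter>i\<in>I. S i)) \<le> (SUP i\<in>I. Inf (ereal ` S i))"
  proof (rule dense_ge)
    fix z assume z: "(SUP i\<in>I. Inf (ereal ` S i)) < z"
    show "Inf (ereal ` (\<Inter>i\<in>I. S i)) \<le> z"
    proof (cases z)
      case (real y)
      have "y \<in> S i" if i: "i \<in> I" for i
      proof -
        have "Inf (ereal ` S i) < ereal y"
          using SUP_upper[OF i] z real by (metis le_less_trans)
        then obtain s where "s \<in> S i" "s < y" by (auto simp: Inf_less_iff)
        then show ?thesis using up[OF i] by simp
      qed
      then show ?thesis using real by (auto intro: Inf_lower)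
    qed (use z in auto)
  qed
qed

lemma Sup_ereal_INTER_downclosed:
  fixes S :: "'i \<Rightarrow> real set"
  assumes down: "\<And>i x y. i \<in> I \<Longrightarrow> x \<in> S i \<Longrightarrow> y \<le> x \<Longrightarrow> y \<in> S i"
  shows "Sup (ereal ` (\<Inter>i\<in>I. S i)) = (INF i\<in>I. Sup (ereal ` S i))"
proof (rule antisym)
  show "Sup (ereal ` (\<Inter>i\<in>I. S i)) \<le> (INF i\<in>I. Sup (ereal ` S i))"
    by (intro INF_greatest Sup_subset_mono image_mono) auto
  show "(INF i\<in>I. Sup (ereal ` S i)) \<le> Sup (ereal ` (\<Inter>i\<in>I. S i))"
  proof (rule dense_le)
    fix z assume z: "z < (INF i\<in>I. Sup (ereal ` S i))"
    show "z \<le> Sup (ereal ` (\<Inter>i\<in>I. S i))"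
    proof (cases z)
      case (real y)
      have "y \<in> S i" if i: "i \<in> I" for i
      proof -
        have "ereal y < Sup (ereal ` S i)"
          using INF_lower[OF i] z real by (metis less_le_trans)
        then obtain s where "s \<in> S i" "y < s" by (auto simp: less_Sup_iff)
        then show ?thesis using down[OF i] by simp
      qed
      then show ?thesis using real by (auto intro: Sup_upper)
    qed (use z in auto)
  qed
qed

lemma LVaR_SUP:
  assumes "mono \<Lambda>" and W: "W \<noteq> {}" and cap: "\<forall>w\<in>W. capacity M w"
    and "X \<in> borel_measurable M"
  shows "(SUP w\<in>W. LVaR M \<Lambda> w X) = LVaR M \<Lambda> (\<lambda>A. SUP w\<in>W. w A) X"
proof -
  define E where "E x = {\<omega>\<in>space M. x < X \<omega>}" for x
  have E: "E x \<in> sets M" for x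
    unfolding E_def using \<open>X \<in> borel_measurable M\<close> by measurable
  have "y \<in> {x. w (E x) \<le> \<Lambda> x}" if "w \<in> W" "x \<in> {x. w (E x) \<le> \<Lambda> x}" "x \<le> y" for w x y
  proof -
    have "E y \<subseteq> E x" using \<open>x \<le> y\<close> by (auto simp: E_def)
    then have "w (E y) \<le> w (E x)" using cap \<open>w \<in> W\<close> E capacity_mono by blast
    also have "\<dots> \<le> \<Lambda> x" using that(2) by simp
    also have "\<dots> \<le> \<Lambda> y" using \<open>mono \<Lambda>\<close> \<open>x \<le> y\<close> by (rule monoD)
    finally show ?thesis by simp
  qed
  then have "(SUP w\<in>W. LVaR M \<Lambda> w X) = Inf (ereal ` (\<Inter>w\<in>W. {x. w (E x) \<le> \<Lambda> x}))"
    unfolding LVaR_def E_def by (rule Inf_ereal_INTER_upclosed[symmetric])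
  also have "(\<Inter>w\<in>W. {x. w (E x) \<le> \<Lambda> x}) = {x. (SUP w\<in>W. w (E x)) \<le> \<Lambda> x}"
    using cSUP_le_iff[OF W bdd_above_capacities[OF cap E]] by auto
  finally show ?thesis unfolding LVaR_def E_def .
qed

lemma LVaR_plus_INF:
  assumes "mono \<Lambda>" and W: "W \<noteq> {}" and cap: "\<forall>w\<in>W. capacity M w"
    and "X \<in> borel_measurable M"
  shows "(INF w\<in>W. LVaR_plus M \<Lambda> w X) = LVaR_plus M \<Lambda> (\<lambda>A. INF w\<in>W. w A) X"
proof -
  define E where "E x = {\<omega>\<in>space M. x < X \<omega>}" for x
  have E: "E x \<in> sets M" for x
    unfolding E_def using \<open>X \<in> borel_measurable M\<close> by measurable
  have "y \<in> {x. \<Lambda> x \<le> w (E x)}" if "w \<in> W" "x \<in> {x. \<Lambda> x \<le> w (E x)}" "y \<le> x" for w x y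
  proof -
    have "E x \<subseteq> E y" using \<open>y \<le> x\<close> by (auto simp: E_def)
    then have "w (E x) \<le> w (E y)" using cap \<open>w \<in> W\<close> E capacity_mono by blast
    moreover have "\<Lambda> y \<le> \<Lambda> x" using \<open>mono \<Lambda>\<close> \<open>y \<le> x\<close> by (rule monoD)
    ultimately show ?thesis using that(2) by simp
  qed
  then have "(INF w\<in>W. LVaR_plus M \<Lambda> w X) = Sup (ereal ` (\<Inter>w\<in>W. {x. \<Lambda> x \<le> w (E x)}))"
    unfolding LVaR_plus_def E_def by (rule Sup_ereal_INTER_downclosed[symmetric])
  also have "(\<Inter>w\<in>W. {x. \<Lambda> x \<le> w (E x)}) = {x. \<Lambda> x \<le> (INF w\<in>W. w (E x))}"
    using le_cINF_iff[OF W bdd_below_capacities[OF cap E]] by auto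
  finally show ?thesis unfolding LVaR_plus_def E_def .
qed

theorem mainTheorem2:
  fixes M :: "'a measure" and \<Lambda> :: "real \<Rightarrow> real"
    and W :: "('a set \<Rightarrow> real) set" and \<P> :: "'a measure set"
  assumes "\<Lambda> \<in> H_I"
    and "W \<noteq> {}" and "\<forall>w\<in>W. capacity M w"
    and "\<P> \<noteq> {}"
    and "\<forall>Q\<in>\<P>. prob_space Q \<and> sets Q = sets M"
  shows "capacity M (\<lambda>A. SUP w\<in>W. w A) \<and> capacity M (\<lambda>A. INF w\<in>W. w A)
    \<and> (\<forall>X\<in>borel_measurable M.
          (SUP w\<in>W. LVaR M \<Lambda> w X) = LVaR M \<Lambda> (\<lambda>A. SUP w\<in>W. w A) X
        \<and> (INF w\<in>W. LVaR_plus M \<Lambda> w X) = LVaR_plus M \<Lambda> (\<lambda>A. INF w\<in>W. w A) X)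
    \<and> (\<forall>X\<in>borel_measurable M.
          (SUP Q\<in>\<P>. LVaR M \<Lambda> (measure Q) X) = LVaR M \<Lambda> (\<lambda>A. SUP Q\<in>\<P>. measure Q A) X
        \<and> (INF Q\<in>\<P>. LVaR_plus M \<Lambda> (measure Q) X) = LVaR_plus M \<Lambda> (\<lambda>A. INF Q\<in>\<P>. measure Q A) X)"
proof -
  have "mono \<Lambda>" using assms(1) by (simp add: H_I_def)
  have P: "measure ` \<P> \<noteq> {}" "\<forall>w\<in>measure ` \<P>. capacity M w"
    using assms(4,5) capacity_measure by blast+
  show ?thesis
    using capacity_SUP[OF assms(2,3)] capacity_INF[OF assms(2,3)]
      LVaR_SUP[OF \<open>mono \<Lambda>\<close> assms(2,3)] LVaR_plus_INF[OF \<open>mono \<Lambda>\<close> assms(2,3)]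
      LVaR_SUP[OF \<open>mono \<Lambda>\<close> P] LVaR_plus_INF[OF \<open>mono \<Lambda>\<close> P]
    by (simp add: image_comp)
qed

end
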